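(* Let $((A_i,B_i))_{i\in\mathbb N}$ be a strictly increasing sequence of oriented separations of a connected locally finite graph $G$ whose underlying separations are tight, let $(A,B)=(\bigcup_iA_i,\bigcap_iB_i)$ be its limit, and let $(C,D)$ be an oriented separation of $G$ of finite order. If the sequence is non-exhaustive (i.e. $B\neq\emptyset$) and $(C,D)\le(A,B)$, then there is $I\in\mathbb N$ with $(C,D)\le(A_i,B_i)$ for all $i\ge I$.
   Context: A separation of $G$ is an unordered pair $\{A,B\}$ of subsets of $V(G)$ with $A\cup B=V(G)$ and no edge between $A\setminus B$ and $B\setminus A$; its order is $|A\cap B|$. Oriented separations are ordered by $(A,B)\le(C,D)$ iff $A\subseteq C$ and $B\supseteq D$. For $X\subseteq V(G)$, a component $K$ of $G-X$ is tight if $N_G(K)=X$; a separation $\{A,B\}$ is tight if both $A\setminus B$ and $B\setminus A$ contain the vertex set of a tight component of $G-(A\cap B)$. *)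

theory Defs
  imports Main
begin

definition graph :: "'a set \<Rightarrow> ('a \<Rightarrow> 'a \<Rightarrow> bool) \<Rightarrow> bool" where
  "graph V E \<longleftrightarrow> (\<forall>x y. E x y \<longrightarrow> x \<in> V \<and> y \<in> V \<and> E y x \<and> x \<noteq> y)"

definition locally_finite :: "'a set \<Rightarrow> ('a \<Rightarrow> 'a \<Rightarrow> bool) \<Rightarrow> bool" where
  "locally_finite V E \<longleftrightarrow> (\<forall>v\<in>V. finite {w. E v w})"

definition reach_in :: "('a \<Rightarrow> 'a \<Rightarrow> bool) \<Rightarrow> 'a set \<Rightarrow> 'a \<Rightarrow> 'a \<Rightarrow> bool" where
  "reach_in E S = (\<lambda>u v. E u v \<and> u \<in> S \<and> v \<in> S)\<^sup>*\<^sup>*"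

definition connected_graph :: "'a set \<Rightarrow> ('a \<Rightarrow> 'a \<Rightarrow> bool) \<Rightarrow> bool" where
  "connected_graph V E \<longleftrightarrow> V \<noteq> {} \<and> (\<forall>x\<in>V. \<forall>y\<in>V. reach_in E V x y)"

definition component_of :: "'a set \<Rightarrow> ('a \<Rightarrow> 'a \<Rightarrow> bool) \<Rightarrow> 'a set \<Rightarrow> 'a set \<Rightarrow> bool" where
  "component_of V E X K \<longleftrightarrow>
     (\<exists>x \<in> V - X. K = {y \<in> V - X. reach_in E (V - X) x y})"

definition nbh :: "('a \<Rightarrow> 'a \<Rightarrow> bool) \<Rightarrow> 'a set \<Rightarrow> 'a set" where
  "nbh E K = {v. v \<notin> K \<and> (\<exists>u\<in>K. E u v)}"

definition tight_component :: "'a set \<Rightarrow> ('a \<Rightarrow> 'a \<Rightarrow> bool) \<Rightarrow> 'a set \<Rightarrow> 'a set \<Rightarrow> bool" where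
  "tight_component V E X K \<longleftrightarrow> component_of V E X K \<and> nbh E K = X"

definition separation :: "'a set \<Rightarrow> ('a \<Rightarrow> 'a \<Rightarrow> bool) \<Rightarrow> 'a set \<Rightarrow> 'a set \<Rightarrow> bool" where
  "separation V E A B \<longleftrightarrow> A \<union> B = V \<and>
     (\<forall>x y. x \<in> A - B \<longrightarrow> y \<in> B - A \<longrightarrow> \<not> E x y)"

definition finite_order :: "'a set \<Rightarrow> 'a set \<Rightarrow> bool" where
  "finite_order A B \<longleftrightarrow> finite (A \<inter> B)"

definition tight_separation :: "'a set \<Rightarrow> ('a \<Rightarrow> 'a \<Rightarrow> bool) \<Rightarrow> 'a set \<Rightarrow> 'a set \<Rightarrow> bool" where
  "tight_separation V E A B \<longleftrightarrow> separation V E A B \<and>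
     (\<exists>K. tight_component V E (A \<inter> B) K \<and> K \<subseteq> A - B) \<and>
     (\<exists>K. tight_component V E (A \<inter> B) K \<and> K \<subseteq> B - A)"

definition sep_le :: "'a set \<times> 'a set \<Rightarrow> 'a set \<times> 'a set \<Rightarrow> bool" where
  "sep_le P Q \<longleftrightarrow> fst P \<subseteq> fst Q \<and> snd Q \<subseteq> snd P"

definition sep_less :: "'a set \<times> 'a set \<Rightarrow> 'a set \<times> 'a set \<Rightarrow> bool" where
  "sep_less P Q \<longleftrightarrow> sep_le P Q \<and> P \<noteq> Q"

end

theory Submission
  imports Defs
begin

text \<open>Since the sequence is non-exhaustive, some vertex r lies in no A_i: a vertex of \<Inter>B_i
  whose finitely many neighbours all lie in one A_i would be a vertex of the separator A_i \<inter> B_i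
  without a neighbour in the tight component on the B_i-side. As (C,D) has finite order and G is
  locally finite, C \<inter> D and its neighbours in C lie in A_i for all large i; fix such an i.
  If some vertex of A_i \<inter> B_i lay in C - D, so would its neighbour in the tight component
  K \<subseteq> B_i - A_i, hence all of K (which avoids C \<inter> D), and then all of A_i \<inter> B_i would lie in C.
  A path from r \<in> D - C to K would then leave (D - C) - A_i at a vertex of C \<inter> D \<inter> B_i, which
  has a neighbour in K \<subseteq> C - A_i: impossible. So A_i \<inter> B_i \<subseteq> D, and now a path from a vertex
  of (C - D) - A_i to r cannot leave (C - D) - A_i either, neither through C \<inter> D nor through
  A_i \<inter> B_i.\<close>

lemma reach_in_crossing_edge:
  assumes "reach_in E S a b" "P a" "\<not> P b"
  shows "\<exists>v w. E v w \<and> v \<in> S \<and> w \<in> S \<and> P v \<and> \<not> P w"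
  using assms unfolding reach_in_def
  by (induction rule: rtranclp_induct) blast+

lemma component_of_reach_in_self:
  assumes "component_of V E X K"
  obtains k where "k \<in> K" "\<And>z. z \<in> K \<Longrightarrow> reach_in E K k z"
proof -
  obtain k where k: "k \<in> V - X" and K: "K = {y \<in> V - X. reach_in E (V - X) k y}"
    using assms unfolding component_of_def by blast
  have "reach_in E K k z" if "reach_in E (V - X) k z" for z
    using that unfolding reach_in_def
  proof (induction rule: rtranclp_induct)
    case (step y z)
    then have "y \<in> K" "z \<in> K"
      unfolding K reach_in_def by (auto intro: rtranclp.rtrancl_into_rtrancl)
    with step show ?case by (auto intro: rtranclp.rtrancl_into_rtrancl)
  qed simp
  moreover have "k \<in> K"
    using k unfolding K reach_in_def by simp
  ultimately show ?thesis
    using that K by blast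
qed

lemma reach_in_sym:
  assumes "graph V E" "reach_in E S x y"
  shows "reach_in E S y x"
  using assms(2) unfolding reach_in_def
proof (induction rule: rtranclp_induct)
  case (step y z)
  with assms(1) show ?case
    unfolding graph_def by (blast intro: converse_rtranclp_into_rtranclp)
qed simp

lemma component_of_reach_in:
  assumes "graph V E" "component_of V E X K" "y \<in> K" "z \<in> K"
  shows "reach_in E K y z"
proof -
  obtain k where "\<And>z. z \<in> K \<Longrightarrow> reach_in E K k z"
    using component_of_reach_in_self[OF assms(2)] by blast
  then show ?thesis
    using reach_in_sym[OF assms(1)] assms(3,4) unfolding reach_in_def
    by (meson rtranclp_trans)
qed

lemma component_of_subset: "component_of V E X K \<Longrightarrow> K \<subseteq> V - X"
  unfolding component_of_def by blast

lemma tight_component_neighbour: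
  assumes "tight_component V E X K" "s \<in> X"
  obtains u where "u \<in> K" "E u s"
  using assms unfolding tight_component_def nbh_def by blast

lemma separation_sym: "graph V E \<Longrightarrow> separation V E C D \<Longrightarrow> separation V E D C"
  unfolding graph_def separation_def by blast

lemma separation_edge_from_strict_side:
  assumes "graph V E" "separation V E C D" "E x y" "x \<in> C - D"
  shows "y \<in> C"
  using assms unfolding graph_def separation_def by blast

lemma reach_in_avoiding_separator:
  assumes "graph V E" "separation V E C D" "S \<inter> C \<inter> D = {}"
    and "reach_in E S k z" "k \<in> C - D"
  shows "z \<in> C - D"
proof (rule ccontr)
  assume "z \<notin> C - D"
  then obtain v w where vw: "E v w" "w \<in> S" "v \<in> C - D" "w \<notin> C - D"
    using reach_in_crossing_edge[OF assms(4), of "\<lambda>x. x \<in> C - D"] assms(5) by blast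
  then show False
    using separation_edge_from_strict_side[OF assms(1,2)] assms(3) by blast
qed

lemma eventually_subset_of_mono_Union:
  fixes A :: "nat \<Rightarrow> 'a set"
  assumes "mono A" "finite F" "F \<subseteq> (\<Union>i. A i)"
  obtains n where "\<And>i. i \<ge> n \<Longrightarrow> F \<subseteq> A i"
proof -
  obtain n where "F \<subseteq> (\<Union>i<n. A i)"
    using finite_countable_subset[OF assms(2,3)] by blast
  moreover have "A j \<subseteq> A i" if "j < n" "n \<le> i" for i j
    using monoD[OF assms(1)] that by simp
  ultimately have "F \<subseteq> A i" if "i \<ge> n" for i
    using that by blast
  then show ?thesis
    using that by blast
qed

lemma vertex_outside_nonexhaustive_limit:
  fixes As Bs :: "nat \<Rightarrow> 'a set"
  assumes "graph V E" "locally_finite V E" "mono As"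
    and tight: "\<And>i. tight_separation V E (As i) (Bs i)"
    and "(\<Inter>i. Bs i) \<noteq> {}"
  obtains r where "r \<in> V" "\<And>i. r \<notin> As i"
proof -
  have V: "V = As i \<union> Bs i" for i
    using tight unfolding tight_separation_def separation_def by blast
  obtain b where b: "\<And>i. b \<in> Bs i"
    using assms(5) by blast
  show ?thesis
  proof (rule ccontr)
    assume "\<not> thesis"
    then have covered: "V \<subseteq> (\<Union>i. As i)"
      using that by blast
    have "insert b {w. E b w} \<subseteq> V"
      using assms(1) b V unfolding graph_def by blast
    moreover have "finite (insert b {w. E b w})"
      using assms(2) b V unfolding locally_finite_def by blast
    ultimately obtain i where i: "insert b {w. E b w} \<subseteq> As i"
      using eventually_subset_of_mono_Union[OF assms(3)] covered by (meson order_refl subset_trans)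
    obtain K where K: "tight_component V E (As i \<inter> Bs i) K" "K \<subseteq> Bs i - As i"
      using tight unfolding tight_separation_def by blast
    have "b \<in> As i \<inter> Bs i"
      using i b by blast
    then obtain u where "u \<in> K" "E u b"
      by (rule tight_component_neighbour[OF K(1)])
    then have "u \<in> As i"
      using i assms(1) unfolding graph_def by blast
    with \<open>u \<in> K\<close> K(2) show False
      by blast
  qed
qed

lemma separator_subset_right_side:
  assumes G: "graph V E" "connected_graph V E"
    and CD: "separation V E C D" and AB: "separation V E A B"
    and K: "tight_component V E (A \<inter> B) K" "K \<subseteq> B - A"
    and r: "r \<in> V" "r \<notin> A" "r \<notin> C"
    and X: "C \<inter> D \<subseteq> A"
    and nbr: "{y \<in> C. \<exists>x\<in>C \<inter> D. E x y} \<subseteq> A"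
  shows "A \<inter> B \<subseteq> D"
proof (rule ccontr)
  have sym: "E y x" if "E x y" for x y
    using G(1) that unfolding graph_def by blast
  have VAB: "V = A \<union> B" and VCD: "V = C \<union> D"
    using AB CD unfolding separation_def by auto
  have Kcomp: "component_of V E (A \<inter> B) K"
    using K(1) unfolding tight_component_def by blast
  assume "\<not> A \<inter> B \<subseteq> D"
  then obtain s where s: "s \<in> A \<inter> B" "s \<in> C - D"
    using VAB VCD by blast
  then obtain u where u: "u \<in> K" "E u s"
    using tight_component_neighbour[OF K(1)] by blast
  have "u \<in> C - D"
    using separation_edge_from_strict_side[OF G(1) CD sym[OF u(2)] s(2)] u(1) K(2) X by blast
  moreover have "K \<inter> C \<inter> D = {}"
    using K(2) X by blast
  ultimately have KCD: "K \<subseteq> C - D"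
    using reach_in_avoiding_separator[OF G(1) CD] component_of_reach_in[OF G(1) Kcomp u(1)] by blast
  have SC: "A \<inter> B \<subseteq> C"
  proof
    fix s' assume "s' \<in> A \<inter> B"
    then obtain u' where "u' \<in> K" "E u' s'"
      by (rule tight_component_neighbour[OF K(1)])
    then show "s' \<in> C"
      using separation_edge_from_strict_side[OF G(1) CD] KCD by blast
  qed
  have "reach_in E V r u"
    using G(2) r(1) u(1) component_of_subset[OF Kcomp] unfolding connected_graph_def by blast
  then obtain v w where vw: "E v w" "v \<in> V" "w \<in> V" "v \<in> D - C" "v \<notin> A" "\<not> (w \<in> D - C \<and> w \<notin> A)"
    using reach_in_crossing_edge[of E V r u "\<lambda>x. x \<in> D - C \<and> x \<notin> A"] r VCD u(1) KCD by blast
  have "w \<in> D"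
    using separation_edge_from_strict_side[OF G(1) separation_sym[OF G(1) CD] vw(1,4)] .
  moreover have "w \<in> B"
    using separation_edge_from_strict_side[OF G(1) separation_sym[OF G(1) AB] vw(1)] vw(2,5) VAB by blast
  ultimately have w: "w \<in> C \<inter> D" "w \<in> A \<inter> B"
    using vw(6) X SC by blast+
  then obtain y where "y \<in> K" "E y w"
    using tight_component_neighbour[OF K(1)] by blast
  then show False
    using nbr w(1) sym KCD K(2) by blast
qed

lemma sep_le_if_separator_subset:
  assumes G: "graph V E" "connected_graph V E"
    and CD: "separation V E C D" and AB: "separation V E A B"
    and r: "r \<in> V" "r \<notin> A" "r \<notin> C"
    and X: "C \<inter> D \<subseteq> A"
    and nbr: "{y \<in> C. \<exists>x\<in>C \<inter> D. E x y} \<subseteq> A"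
    and S: "A \<inter> B \<subseteq> D"
  shows "sep_le (C, D) (A, B)"
proof -
  have VAB: "V = A \<union> B" and VCD: "V = C \<union> D"
    using AB CD unfolding separation_def by auto
  have "u \<in> A" if u: "u \<in> C - D" for u
  proof (rule ccontr)
    assume "u \<notin> A"
    moreover have "reach_in E V u r"
      using G(2) r(1) u VCD unfolding connected_graph_def by blast
    ultimately obtain v w where vw: "E v w" "v \<in> V" "w \<in> V" "v \<in> C - D" "v \<notin> A" "\<not> (w \<in> C - D \<and> w \<notin> A)"
      using reach_in_crossing_edge[of E V u r "\<lambda>x. x \<in> C - D \<and> x \<notin> A"] u r(3) by blast
    have wC: "w \<in> C"
      using separation_edge_from_strict_side[OF G(1) CD vw(1,4)] .
    show False
    proof (cases "w \<in> D")
      case True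
      with wC vw(1,4,5) show False
        using nbr G(1) unfolding graph_def by blast
    next
      case False
      have "w \<in> B"
        using separation_edge_from_strict_side[OF G(1) separation_sym[OF G(1) AB] vw(1)] vw(2,5) VAB by blast
      with False wC vw(6) S show False
        by blast
    qed
  qed
  with X have "C \<subseteq> A"
    by blast
  moreover have "B \<subseteq> D"
    using S \<open>C \<subseteq> A\<close> VAB VCD by blast
  ultimately show ?thesis
    unfolding sep_le_def by simp
qed

theorem mainTheorem10:
  fixes V :: "'a set" and E :: "'a \<Rightarrow> 'a \<Rightarrow> bool"
    and As Bs :: "nat \<Rightarrow> 'a set" and C D :: "'a set"
  assumes "graph V E" and "connected_graph V E" and "locally_finite V E"
    and "\<And>i. tight_separation V E (As i) (Bs i)"
    and "\<And>i. sep_less (As i, Bs i) (As (Suc i), Bs (Suc i))"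
    and "separation V E C D" and "finite_order C D"
    and "(\<Inter>i. Bs i) \<noteq> {}"
    and "sep_le (C, D) ((\<Union>i. As i), (\<Inter>i. Bs i))"
  shows "\<exists>I. \<forall>i\<ge>I. sep_le (C, D) (As i, Bs i)"
proof -
  have "mono As"
    using assms(5) unfolding mono_iff_le_Suc sep_less_def sep_le_def by auto
  obtain r where r: "r \<in> V" "\<And>i. r \<notin> As i"
    using vertex_outside_nonexhaustive_limit[OF assms(1,3) \<open>mono As\<close> assms(4,8)] by blast
  have CA: "C \<subseteq> (\<Union>i. As i)"
    using assms(9) unfolding sep_le_def by simp
  have rC: "r \<notin> C"
    using r(2) CA by blast
  define F where "F = C \<inter> D \<union> {y \<in> C. \<exists>x\<in>C \<inter> D. E x y}"
  have "C \<inter> D \<subseteq> V"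
    using assms(6) unfolding separation_def by blast
  then have "finite (\<Union>x\<in>C \<inter> D. {y. E x y})"
    using assms(3,7) unfolding finite_order_def locally_finite_def by blast
  then have "finite F"
    using assms(7) unfolding F_def finite_order_def by (auto elim: rev_finite_subset)
  then obtain n where n: "\<And>i. i \<ge> n \<Longrightarrow> F \<subseteq> As i"
    using eventually_subset_of_mono_Union[OF \<open>mono As\<close>] CA unfolding F_def by blast
  have "sep_le (C, D) (As i, Bs i)" if "i \<ge> n" for i
  proof -
    obtain K where K: "tight_component V E (As i \<inter> Bs i) K" "K \<subseteq> Bs i - As i"
      using assms(4) unfolding tight_separation_def by blast
    have sep: "separation V E (As i) (Bs i)"
      using assms(4) unfolding tight_separation_def by blast
    have X: "C \<inter> D \<subseteq> As i"
      and nbr: "{y \<in> C. \<exists>x\<in>C \<inter> D. E x y} \<subseteq> As i"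
      using n[OF that] unfolding F_def by blast+
    show ?thesis
      using sep_le_if_separator_subset[OF assms(1,2,6) sep r(1,2) rC X nbr]
        separator_subset_right_side[OF assms(1,2,6) sep K r(1,2) rC X nbr] by blast
  qed
  then show ?thesis
    by blast
qed

end
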